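(* Let $c\in[0,1]$. For every countable collection of languages $\mathcal{L}$ there is a set-based generator that generates in the limit from $\mathcal{L}$ and achieves set-based upper density at least $1-c$ under adversaries that use an enumeration with finite noise and $c$-omissions. In particular, if the adversary uses an enumeration with finite noise and finite omissions, there is a set-based generator that generates in the limit from $\mathcal{L}$ and achieves set-based upper density $1$.
   Context: The universe is $U=\mathbb{N}$ with its natural order. A language is an infinite subset of $U$; a collection is a countable family of languages. For $A,B\subseteq\mathbb{N}$ with $B=\{b_1<b_2<\cdots\}$, $\mu_{\rm up}(A,B)=\limsup_n\frac1n|A\cap\{b_1,\dots,b_n\}|$ and $\mu_{\rm low}(A,B)=\liminf_n\frac1n|A\cap\{b_1,\dots,b_n\}|$. An enumeration is a sequence of distinct elements of $U$; $S_n=\{x_1,\dots,x_n\}$. An enumeration of $L$ with finite noise is a sequence in which every element of $L$ appears exactly once and $|\{x_1,x_2,\dots\}\setminus L|<\infty$. An enumeration of $K$ with finite noise and $c$-omissions is an enumeration with finite noise of some $\hat K\subseteq K$ with $\mu_{\rm low}(\hat K,K)\ge 1-c$; with finite noise and finite omissions it is one of some $\hat K\subseteq K$ with $|K\setminus\hat K|<\infty$. A set-based generator is a sequence of maps that, given $x_1,\dots,x_n$ (and knowledge of $\mathcal{L}$, not of $K$), outputs a set $A_n\subseteq U\setminus S_n$. It generates in the limit if for every $K\in\mathcal{L}$ and every admissible enumeration of $K$ there is $n^\star$ with $A_n\subseteq K$ for all $n\ge n^\star$. It achieves set-based upper density $\rho$ if $\limsup_n\mu_{\rm low}(A_n,K)\ge\rho$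 (for every such $K$ and enumeration). *)

theory Defs
  imports Complex_Main "HOL-Library.Countable_Set" "HOL-Library.Infinite_Set"
    "HOL-Library.Extended_Real" "HOL-Library.Liminf_Limsup"
begin

text \<open>Universe U = nat. The elements of an infinite set B, listed increasingly
  b_1 < b_2 < ..., are Infinite_Set.enumerate B 0, enumerate B 1, ...
  (0-indexed).\<close>

definition prefix_B :: "nat set \<Rightarrow> nat \<Rightarrow> nat set" where
  "prefix_B B n = Infinite_Set.enumerate B ` {..<n}"

definition mu_low :: "nat set \<Rightarrow> nat set \<Rightarrow> ereal" where
  "mu_low A B = liminf (\<lambda>n. ereal (real (card (A \<inter> prefix_B B (Suc n))) / real (Suc n)))"

definition mu_up :: "nat set \<Rightarrow> nat set \<Rightarrow> ereal" where
  "mu_up A B = limsup (\<lambda>n. ereal (real (card (A \<inter> prefix_B B (Suc n))) / real (Suc n)))"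

definition collection :: "nat set set \<Rightarrow> bool" where
  "collection Lc \<longleftrightarrow> countable Lc \<and> (\<forall>L\<in>Lc. infinite L)"

definition enumeration :: "(nat \<Rightarrow> nat) \<Rightarrow> bool" where
  "enumeration x \<longleftrightarrow> inj x"

text \<open>S_n = {x_1,...,x_n}; with 0-indexed sequences this is x ` {..<n}.\<close>
definition S :: "(nat \<Rightarrow> nat) \<Rightarrow> nat \<Rightarrow> nat set" where
  "S x n = x ` {..<n}"

definition enum_finite_noise :: "nat set \<Rightarrow> (nat \<Rightarrow> nat) \<Rightarrow> bool" where
  "enum_finite_noise L x \<longleftrightarrow> enumeration x \<and> L \<subseteq> range x \<and> finite (range x - L)"

definition enum_noise_c_omissions :: "real \<Rightarrow> nat set \<Rightarrow> (nat \<Rightarrow> nat) \<Rightarrow> bool" where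
  "enum_noise_c_omissions c K x \<longleftrightarrow>
     (\<exists>Kh. Kh \<subseteq> K \<and> mu_low Kh K \<ge> ereal (1 - c) \<and> enum_finite_noise Kh x)"

definition enum_noise_fin_omissions :: "nat set \<Rightarrow> (nat \<Rightarrow> nat) \<Rightarrow> bool" where
  "enum_noise_fin_omissions K x \<longleftrightarrow>
     (\<exists>Kh. Kh \<subseteq> K \<and> finite (K - Kh) \<and> enum_finite_noise Kh x)"

definition set_generator :: "(nat list \<Rightarrow> nat set) \<Rightarrow> bool" where
  "set_generator G \<longleftrightarrow> (\<forall>xs. G xs \<inter> set xs = {})"

definition gen_out :: "(nat list \<Rightarrow> nat set) \<Rightarrow> (nat \<Rightarrow> nat) \<Rightarrow> nat \<Rightarrow> nat set" where
  "gen_out G x n = G (map x [0..<n])"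

definition generates_in_limit ::
  "(nat list \<Rightarrow> nat set) \<Rightarrow> nat set set \<Rightarrow> (nat set \<Rightarrow> (nat \<Rightarrow> nat) \<Rightarrow> bool) \<Rightarrow> bool" where
  "generates_in_limit G Lc Adm \<longleftrightarrow>
     (\<forall>K\<in>Lc. \<forall>x. Adm K x \<longrightarrow> (\<exists>n0. \<forall>n\<ge>n0. gen_out G x n \<subseteq> K))"

definition achieves_set_upper_density ::
  "(nat list \<Rightarrow> nat set) \<Rightarrow> nat set set \<Rightarrow> (nat set \<Rightarrow> (nat \<Rightarrow> nat) \<Rightarrow> bool) \<Rightarrow> real \<Rightarrow> bool" where
  "achieves_set_upper_density G Lc Adm \<rho> \<longleftrightarrow>
     (\<forall>K\<in>Lc. \<forall>x. Adm K x \<longrightarrow> limsup (\<lambda>n. mu_low (gen_out G x n) K) \<ge> ereal \<rho>)"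

end

theory Submission
  imports Defs "HOL-Analysis.Extended_Real_Limits"
begin

text \<open>Enumerate the collection as L_0, L_1, .... After n observations and for every t \<le> n,
  consider the indices i \<le> t whose languages contain all of x_t, ..., x_(n-1). For fixed t this
  set only shrinks as n grows, so it eventually settles. The generator picks the least t whose
  set has just changed (its level) and outputs the intersection of the corresponding languages,
  minus what has been seen. Since every fixed t settles, the level tends to infinity; once it
  exceeds both an index of the target K and the position of the last noisy element, K is
  among the intersected languages and the output lies in K. Moreover, infinitely often the
  set chosen at time n never changes again; then every later x_j lies in all its languages, so
  the output contains all unseen elements of the enumerated subset of K, and its lower density
  in K is at least that of this subset: 1 - c, or 1 if only finitely many elements are
  omitted.\<close>

lemma finite_prefix_B [simp]: "finite (prefix_B B n)"
  unfolding prefix_B_def by simp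

lemma mu_low_mono: "A \<subseteq> A' \<Longrightarrow> mu_low A B \<le> mu_low A' B"
  unfolding mu_low_def
  by (intro Liminf_mono always_eventually allI iffD2[OF ereal_less_eq(3)]
        divide_right_mono of_nat_mono card_mono) auto

lemma mu_low_Diff_finite:
  assumes "finite F"
  shows "mu_low A B \<le> mu_low (A - F) B"
proof -
  define r where "r A n = real (card (A \<inter> prefix_B B (Suc n))) / real (Suc n)" for A n
  define d where "d n = - real (card F) / real (Suc n)" for n
  have card_le: "card (A \<inter> prefix_B B (Suc n)) \<le> card ((A - F) \<inter> prefix_B B (Suc n)) + card F"
    for n
  proof -
    have "card (A \<inter> prefix_B B (Suc n)) \<le> card ((A - F) \<inter> prefix_B B (Suc n) \<union> F)"
      by (intro card_mono) (auto simp: assms)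
    then show ?thesis
      using card_Un_le[of "(A - F) \<inter> prefix_B B (Suc n)" F] by linarith
  qed
  have "real (card (A \<inter> prefix_B B (Suc n))) - real (card F)
      \<le> real (card ((A - F) \<inter> prefix_B B (Suc n)))" for n
    using card_le[of n] by (simp add: diff_le_eq flip: of_nat_add)
  then have ratio_le: "r A n + d n \<le> r (A - F) n" for n
    unfolding r_def d_def by (simp add: diff_divide_distrib[symmetric] divide_right_mono)
  have "(\<lambda>n. ereal (d n)) \<longlonglongrightarrow> 0"
    unfolding d_def zero_ereal_def
    by (intro tendsto_ereal filterlim_compose[OF lim_const_over_n filterlim_Suc])
  then have "liminf (\<lambda>n. ereal (r A n)) = liminf (\<lambda>n. ereal (d n) + ereal (r A n))"
    by (subst ereal_liminf_lim_add) auto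
  also have "\<dots> \<le> liminf (\<lambda>n. ereal (r (A - F) n))"
    using ratio_le by (intro Liminf_mono always_eventually) (simp add: add.commute)
  finally show ?thesis unfolding mu_low_def r_def .
qed

lemma mu_low_self:
  assumes "infinite K"
  shows "mu_low K K = 1"
proof -
  have "card (K \<inter> prefix_B K (Suc n)) = Suc n" for n
  proof -
    have "K \<inter> prefix_B K (Suc n) = enumerate K ` {..<Suc n}"
      unfolding prefix_B_def using enumerate_in_set[OF assms] by auto
    moreover have "inj (enumerate K)"
      using strict_mono_enumerate[OF assms] by (rule strict_mono_imp_inj_on)
    ultimately show ?thesis by (simp add: card_image inj_on_subset)
  qed
  then show ?thesis unfolding mu_low_def by (simp add: Liminf_const)
qed

lemma mu_low_eq_1_if_finite_Diff:
  assumes "infinite K" and "Kh \<subseteq> K" and "finite (K - Kh)"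
  shows "mu_low Kh K = 1"
proof (rule antisym)
  show "mu_low Kh K \<le> 1"
    using mu_low_mono[OF assms(2), of K] mu_low_self[OF assms(1)] by simp
  have "mu_low K K \<le> mu_low (K - (K - Kh)) K"
    by (rule mu_low_Diff_finite[OF assms(3)])
  then show "1 \<le> mu_low Kh K"
    using mu_low_self[OF assms(1)] assms(2) by (simp add: Diff_Diff_Int Int_absorb1)
qed

lemma le_limsup_if_frequently:
  fixes f :: "nat \<Rightarrow> 'a :: complete_linorder"
  assumes "\<exists>\<^sub>F n in sequentially. C \<le> f n"
  shows "C \<le> limsup f"
proof (rule ccontr)
  assume "\<not> C \<le> limsup f"
  then have "\<forall>\<^sub>F n in sequentially. f n < C"
    by (intro Limsup_lessD) simp
  with assms show False
    by (simp add: frequently_def eventually_mono not_le)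
qed

definition consistent :: "(nat \<Rightarrow> nat set) \<Rightarrow> (nat \<Rightarrow> nat) \<Rightarrow> nat \<Rightarrow> nat \<Rightarrow> nat set" where
  "consistent L x t n = {i. i \<le> t \<and> (\<forall>j. t \<le> j \<and> j < n \<longrightarrow> x j \<in> L i)}"

text \<open>The case t = n always counts as a change, so the LEAST below exists and level n \<le> n.\<close>
definition changed :: "(nat \<Rightarrow> nat set) \<Rightarrow> (nat \<Rightarrow> nat) \<Rightarrow> nat \<Rightarrow> nat \<Rightarrow> bool" where
  "changed L x t n \<longleftrightarrow> t = n \<or> consistent L x t n \<noteq> consistent L x t (n - 1)"

definition level :: "(nat \<Rightarrow> nat set) \<Rightarrow> (nat \<Rightarrow> nat) \<Rightarrow> nat \<Rightarrow> nat" where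
  "level L x n = (LEAST t. changed L x t n)"

definition guess :: "(nat \<Rightarrow> nat set) \<Rightarrow> (nat \<Rightarrow> nat) \<Rightarrow> nat \<Rightarrow> nat set" where
  "guess L x n = (\<Inter>i\<in>consistent L x (level L x n) n. L i) - x ` {..<n}"

definition generator :: "(nat \<Rightarrow> nat set) \<Rightarrow> nat list \<Rightarrow> nat set" where
  "generator L xs = guess L (nth xs) (length xs)"

definition settled :: "(nat \<Rightarrow> nat set) \<Rightarrow> (nat \<Rightarrow> nat) \<Rightarrow> nat \<Rightarrow> bool" where
  "settled L x n \<longleftrightarrow> (\<forall>m\<ge>n. consistent L x (level L x n) m = consistent L x (level L x n) n)"

lemma guess_cong:
  assumes "\<And>j. j < n \<Longrightarrow> y j = x j"
  shows "guess L y n = guess L x n"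
proof -
  have consistent_eq: "consistent L y t m = consistent L x t m" if "m \<le> n" for t m
    using assms that unfolding consistent_def by auto
  then have "level L y n = level L x n"
    unfolding level_def changed_def by simp
  moreover have "y ` {..<n} = x ` {..<n}"
    using assms by auto
  ultimately show ?thesis
    unfolding guess_def using consistent_eq by simp
qed

lemma gen_out_generator: "gen_out (generator L) x n = guess L x n"
  unfolding gen_out_def generator_def length_map length_upt diff_zero by (rule guess_cong) simp

lemma set_generator_generator: "set_generator (generator L)"
  unfolding set_generator_def generator_def guess_def by (auto simp: in_set_conv_nth)

lemma changed_level: "changed L x (level L x n) n"
  and level_le: "level L x n \<le> n"
proof -
  have "changed L x n n"
    unfolding changed_def by simp
  then show "changed L x (level L x n) n" "level L x n \<le> n"
    unfolding level_def by (auto intro: LeastI Least_le)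
qed

lemma consistent_antimono: "n \<le> m \<Longrightarrow> consistent L x t m \<subseteq> consistent L x t n"
  unfolding consistent_def by auto

lemma consistent_stabilizes: "\<exists>n\<^sub>0. \<forall>n\<ge>n\<^sub>0. consistent L x t n = consistent L x t n\<^sub>0"
proof -
  have finite: "finite (consistent L x t n)" for n
    unfolding consistent_def by auto
  obtain n\<^sub>0 where least: "\<And>n. card (consistent L x t n\<^sub>0) \<le> card (consistent L x t n)"
    using ex_has_least_nat[of "\<lambda>_. True" 0 "\<lambda>n. card (consistent L x t n)"] by blast
  have "consistent L x t n = consistent L x t n\<^sub>0" if "n \<ge> n\<^sub>0" for n
  proof (rule card_subset_eq)
    show subset: "consistent L x t n \<subseteq> consistent L x t n\<^sub>0"
      using consistent_antimono[OF that] .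
    show "card (consistent L x t n) = card (consistent L x t n\<^sub>0)"
      using card_mono[OF finite subset] least[of n] by simp
  qed (rule finite)
  then show ?thesis by blast
qed

lemma eventually_not_changed: "\<forall>\<^sub>F n in sequentially. \<not> changed L x t n"
proof -
  obtain n\<^sub>0 where stable: "\<And>n. n \<ge> n\<^sub>0 \<Longrightarrow> consistent L x t n = consistent L x t n\<^sub>0"
    using consistent_stabilizes by blast
  have "\<not> changed L x t n" if "n > max n\<^sub>0 t" for n
  proof -
    have "n\<^sub>0 \<le> n - 1"
      using that by auto
    then show ?thesis
      using that stable[of n] stable[of "n - 1"] unfolding changed_def by simp
  qed
  then show ?thesis
    unfolding eventually_sequentially by (meson Suc_le_eq)
qed

lemma filterlim_level_at_top: "filterlim (level L x) at_top sequentially"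
  unfolding filterlim_at_top
proof
  fix b
  have "\<forall>\<^sub>F n in sequentially. \<forall>t\<in>{..<b}. \<not> changed L x t n"
    by (rule eventually_ball_finite) (auto intro: eventually_not_changed)
  then show "\<forall>\<^sub>F n in sequentially. b \<le> level L x n"
    by eventually_elim (metis changed_level lessThan_iff not_le)
qed

text \<open>Take the last time whose level is at most the given bound (it exists because levels
  tend to infinity); no later time has a level at most its level, so nothing at that level
  changes again.\<close>
lemma frequently_settled: "\<exists>\<^sub>F n in sequentially. settled L x n"
  unfolding frequently_sequentially
proof
  fix n\<^sub>0
  define P where "P = {n. level L x n \<le> n\<^sub>0}"
  have "finite P"
  proof -
    obtain N where "\<forall>n\<ge>N. Suc n\<^sub>0 \<le> level L x n"
      using filterlim_level_at_top[unfolded filterlim_at_top, rule_format, of "Suc n\<^sub>0" L x]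
      unfolding eventually_sequentially by blast
    then have "P \<subseteq> {..<N}"
      unfolding P_def by (auto simp: not_less[symmetric])
    then show ?thesis by (rule finite_subset) simp
  qed
  moreover have "n\<^sub>0 \<in> P"
    unfolding P_def using level_le by simp
  ultimately have n: "Max P \<in> P" "n\<^sub>0 \<le> Max P" "\<And>m. m \<in> P \<Longrightarrow> m \<le> Max P"
    by (auto intro: Max_in)
  define n u where "n = Max P" and "u = level L x n"
  have unchanged: "\<not> changed L x u m" if "m > n" for m
  proof
    assume "changed L x u m"
    then have "level L x m \<le> u"
      unfolding level_def by (rule Least_le)
    also have "u \<le> n\<^sub>0"
      using n(1) unfolding u_def n_def P_def by simp
    finally have "m \<in> P"
      unfolding P_def by simp
    with that n(3) show False unfolding n_def by fastforce
  qed
  have "consistent L x u m = consistent L x u n" if "m \<ge> n" for m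
    using that
  proof (induction m rule: dec_induct)
    case (step m)
    then show ?case using unchanged[of "Suc m"] unfolding changed_def by simp
  qed simp
  then have "settled L x n"
    unfolding settled_def u_def by blast
  moreover have "n \<ge> n\<^sub>0"
    using n(2) unfolding n_def .
  ultimately show "\<exists>n\<ge>n\<^sub>0. settled L x n"
    by blast
qed

lemma settled_guess_contains_future:
  assumes "inj x" and "settled L x n" and "j \<ge> n"
  shows "x j \<in> guess L x n"
proof -
  have "x j \<in> L i" if "i \<in> consistent L x (level L x n) n" for i
  proof -
    have "consistent L x (level L x n) (Suc j) = consistent L x (level L x n) n"
      using assms(2) le_SucI[OF assms(3)] unfolding settled_def by blast
    with that have "i \<in> consistent L x (level L x n) (Suc j)"
      by simp
    then show ?thesis
      unfolding consistent_def using level_le[of L x n] assms(3) by auto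
  qed
  moreover have "x j \<notin> x ` {..<n}"
    using assms(1,3) by (simp add: inj_image_mem_iff)
  ultimately show ?thesis
    unfolding guess_def by blast
qed

lemma eventually_guess_subset:
  assumes "\<forall>\<^sub>F j in sequentially. x j \<in> L z"
  shows "\<forall>\<^sub>F n in sequentially. guess L x n \<subseteq> L z"
proof -
  obtain N where N: "\<And>j. j \<ge> N \<Longrightarrow> x j \<in> L z"
    using assms unfolding eventually_sequentially by blast
  have guess_subset: "guess L x n \<subseteq> L z" if "max z N \<le> level L x n" for n
  proof -
    have "z \<in> consistent L x (level L x n) n"
      using that N unfolding consistent_def by auto
    then show ?thesis
      unfolding guess_def by blast
  qed
  have "\<forall>\<^sub>F n in sequentially. max z N \<le> level L x n"
    using filterlim_level_at_top unfolding filterlim_at_top by blast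
  then show ?thesis
    by (rule eventually_mono) (rule guess_subset)
qed

lemma mu_low_le_limsup_guess:
  assumes "inj x" and "Kh \<subseteq> range x"
  shows "mu_low Kh K \<le> limsup (\<lambda>n. mu_low (guess L x n) K)"
proof (rule le_limsup_if_frequently)
  have settled_le: "mu_low Kh K \<le> mu_low (guess L x n) K" if "settled L x n" for n
  proof -
    have "Kh - x ` {..<n} \<subseteq> guess L x n"
    proof
      fix y assume y: "y \<in> Kh - x ` {..<n}"
      with assms(2) obtain j where j: "y = x j"
        by blast
      with y have "n \<le> j"
        by (auto simp: not_le[symmetric])
      with j show "y \<in> guess L x n"
        using settled_guess_contains_future[OF assms(1) that] by simp
    qed
    then have "mu_low (Kh - x ` {..<n}) K \<le> mu_low (guess L x n) K"
      by (rule mu_low_mono)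
    then show ?thesis
      using mu_low_Diff_finite[of "x ` {..<n}" Kh K] by simp
  qed
  show "\<exists>\<^sub>F n in sequentially. mu_low Kh K \<le> mu_low (guess L x n) K"
    using frequently_settled[of L x] settled_le by (rule frequently_elim1)
qed

lemma eventually_in_if_finite_noise:
  assumes "enum_finite_noise Kh x"
  shows "\<forall>\<^sub>F j in sequentially. x j \<in> Kh"
proof -
  have "finite (x -` (range x - Kh))"
    using assms unfolding enum_finite_noise_def enumeration_def by (intro finite_vimageI) auto
  moreover have "x -` (range x - Kh) = {j. x j \<notin> Kh}"
    by auto
  ultimately show ?thesis
    by (simp add: eventually_cofinite flip: cofinite_eq_sequentially)
qed

lemma from_nat_into_generator_succeeds:
  assumes "countable Lc"
    and "\<And>K x. K \<in> Lc \<Longrightarrow> Adm K x \<Longrightarrow> \<exists>Kh\<subseteq>K. ereal \<rho> \<le> mu_low Kh K \<and> enum_finite_noise Kh x"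
  shows "generates_in_limit (generator (from_nat_into Lc)) Lc Adm
    \<and> achieves_set_upper_density (generator (from_nat_into Lc)) Lc Adm \<rho>"
  unfolding generates_in_limit_def achieves_set_upper_density_def gen_out_generator
proof (intro conjI ballI allI impI)
  fix K x
  assume K: "K \<in> Lc" and "Adm K x"
  then obtain Kh where Kh: "Kh \<subseteq> K" "ereal \<rho> \<le> mu_low Kh K" "enum_finite_noise Kh x"
    using assms(2) by blast
  obtain z where z: "from_nat_into Lc z = K"
    using from_nat_into_surj[OF assms(1) K] by blast
  have "\<forall>\<^sub>F j in sequentially. x j \<in> from_nat_into Lc z"
    using eventually_in_if_finite_noise[OF Kh(3)] Kh(1) z by (auto elim: eventually_mono)
  from eventually_guess_subset[of x "from_nat_into Lc" z, OF this]
  show "\<exists>n\<^sub>0. \<forall>n\<ge>n\<^sub>0. guess (from_nat_into Lc) x n \<subseteq> K"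
    unfolding z eventually_sequentially .
  have "mu_low Kh K \<le> limsup (\<lambda>n. mu_low (guess (from_nat_into Lc) x n) K)"
    using Kh(3) unfolding enum_finite_noise_def enumeration_def
    by (intro mu_low_le_limsup_guess) auto
  with Kh(2) show "ereal \<rho> \<le> limsup (\<lambda>n. mu_low (guess (from_nat_into Lc) x n) K)"
    by (rule order_trans)
qed

theorem theorem6p1:
  fixes c :: real and Lc :: "nat set set"
  assumes "0 \<le> c" and "c \<le> 1" and "collection Lc"
  shows "(\<exists>G. set_generator G
             \<and> generates_in_limit G Lc (enum_noise_c_omissions c)
             \<and> achieves_set_upper_density G Lc (enum_noise_c_omissions c) (1 - c))
       \<and> (\<exists>G. set_generator G
             \<and> generates_in_limit G Lc enum_noise_fin_omissions
             \<and> achieves_set_upper_density G Lc enum_noise_fin_omissions 1)"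
proof -
  let ?G = "generator (from_nat_into Lc)"
  have countable: "countable Lc" and infinite: "\<And>K. K \<in> Lc \<Longrightarrow> infinite K"
    using assms(3) unfolding collection_def by auto
  have "generates_in_limit ?G Lc (enum_noise_c_omissions c)
      \<and> achieves_set_upper_density ?G Lc (enum_noise_c_omissions c) (1 - c)"
    by (rule from_nat_into_generator_succeeds[OF countable]) (simp add: enum_noise_c_omissions_def)
  moreover have "generates_in_limit ?G Lc enum_noise_fin_omissions
      \<and> achieves_set_upper_density ?G Lc enum_noise_fin_omissions 1"
  proof (rule from_nat_into_generator_succeeds[OF countable])
    fix K x
    assume "K \<in> Lc" and "enum_noise_fin_omissions K x"
    then obtain Kh where Kh: "Kh \<subseteq> K" "finite (K - Kh)" "enum_finite_noise Kh x"
      unfolding enum_noise_fin_omissions_def by blast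
    have "mu_low Kh K = ereal 1"
      using mu_low_eq_1_if_finite_Diff[OF infinite[OF \<open>K \<in> Lc\<close>] Kh(1,2)] by (simp add: one_ereal_def)
    with Kh show "\<exists>Kh\<subseteq>K. ereal 1 \<le> mu_low Kh K \<and> enum_finite_noise Kh x"
      by auto
  qed
  ultimately show ?thesis
    using set_generator_generator by blast
qed

end
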